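(* Let $\rho$ be a finitary type. The class of all $\rho$-dimensional t-algebras equals $\mathrm{Mod}(\mathrm{Str}(\rho))$ and is an Et-variety of type $\rho^\star$.
   Context: $\mathbb N=\{1,2,\dots\}$. A thread on $A$ is $s\in A^{\mathbb N}$; $r[a_1,\dots,a_n]$ is the thread with entries $a_i$ for $i\le n$ and $r_i$ for $i>n$; $r\equiv_{\mathbb N}s$ iff $\{i:r_i\neq s_i\}$ is finite, $[s]_{\mathbb N}$ its class. A trace on $A$ is a nonempty union of $\equiv_{\mathbb N}$-classes. A t-algebra of type $\tau$ and trace $\mathsf a$ is $(A,\mathsf a,\sigma^{\mathbf A})_{\sigma\in\tau}$ with $\sigma^{\mathbf A}:\mathsf a\to A$ arbitrary. t-subalgebra: $(B,\mathsf b,\sigma^{\mathbf A}|_{\mathsf b})$ with $B\subseteq A$, $\mathsf b\subseteq\mathsf a$ a trace on $B$, $\sigma^{\mathbf A}(\mathsf b)\subseteq B$. t-homomorphism: $f:A\to B$ with $f^{\mathbb N}(\mathsf a)\subseteq\mathsf b$ (coordinatewise) and $f\circ\sigma^{\mathbf A}=\sigma^{\mathbf B}\circ f^{\mathbb N}$; onto if $f$ and $f^{\mathbb N}:\mathsf a\to\mathsf b$ are surjective. t-product: universe $\prod_jA_j$, trace $\prod_j\mathsf a_j$ (with $(s^j)_j$ identified with the thread of entries $(s^j_k)_j$), operations componentwise. t-variety: closed under t-homomorphic images, t-subalgebras, t-products. $\tau$-terms: least set containing $\mathsf e_1,\mathsf e_2,\dots$ and $\sigma(t_1,\dots,t_n,\mathsf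 e_{n+1},\dots)$; term operations $\mathsf e_i^{\mathbf A}(s)=s_i$, $\sigma(t_1,\dots,t_n,\mathsf e_{n+1},\dots)^{\mathbf A}(s)=\sigma^{\mathbf A}(s[t_1^{\mathbf A}(s),\dots,t_n^{\mathbf A}(s)])$; $\theta_{\mathbf A}=\{(t,u):t^{\mathbf A}=u^{\mathbf A}\}$; $\mathrm{Mod}(\Sigma)=\{\mathbf A:\Sigma\subseteq\theta_{\mathbf A}\}$. $\mathbf A_{\bar s}$: universe $A_{\bar s}=\{t^{\mathbf A}(s)\}$, trace $[s]_{\mathbb N}\cap(A_{\bar s})^{\mathbb N}$. An Et-variety is a t-variety $K$ such that $\mathbf A_{\bar s}\in K$ for all $s$ in the trace of $\mathbf A$ implies $\mathbf A\in K$. A finitary type is $\rho=(\rho_n)_{n\ge0}$, disjoint sets of $n$-ary symbols; $\rho^\star=\bigcup_n\rho_n$, regarded as a type of t-algebras. A t-algebra $\mathbf A$ of type $\rho^\star$ and trace $\mathsf a$ is $\rho$-dimensional if for every $\sigma\in\rho_n$ and all $s,u\in\mathsf a$ with $s\equiv_{\mathbb N}u$ and $s_i=u_i$ for all $i\le n$, $\sigma^{\mathbf A}(s)=\sigma^{\mathbf A}(u)$. Let $F_\rho(I)$ be the $\rho$-terms over variables $I=\{v_1,v_2,\dots\}$. Define $(-)^\star:F_\rho(I)\to T_{\rho^\star}$ by $v_i^\star=\mathsf e_i$, $\sigma(p_1,\dots,p_n)^\star=\sigma(p_1^\star,\dots,p_n^\star,\mathsf e_{n+1},\mathsf e_{n+2},\dots)$,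 and $(-)^\bullet:T_{\rho^\star}\to F_\rho(I)$ by $\mathsf e_i^\bullet=v_i$ and, for $\sigma\in\rho_n$ and $t=\sigma(t_1,\dots,t_k,\mathsf e_{k+1},\dots)$: $t^\bullet=\sigma(t_1^\bullet,\dots,t_k^\bullet,v_{k+1},\dots,v_n)$ if $k\le n$, and $t^\bullet=\sigma(t_1^\bullet,\dots,t_n^\bullet)$ if $k>n$. $\mathrm{Str}(\rho)$ is the set of $\rho^\star$-identities $((t^\bullet)^\star,t)$ for $t\in T_{\rho^\star}$ not in the image of $(-)^\star$. *)

theory Defs
  imports "HOL-Library.FuncSet"
begin

(* Conventions: the paper's index set N = {1,2,...} is represented 0-based by nat:
   thread entry s_i (i >= 1) is  s (i - 1).  Variable e_i / v_i is  Var (i-1) / FV (i-1). *)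

definition threads :: "'a set \<Rightarrow> (nat \<Rightarrow> 'a) set" where
  "threads A = {s. \<forall>i. s i \<in> A}"

definition eqN :: "(nat \<Rightarrow> 'a) \<Rightarrow> (nat \<Rightarrow> 'a) \<Rightarrow> bool" where
  "eqN r s \<longleftrightarrow> finite {i. r i \<noteq> s i}"

definition is_trace :: "'a set \<Rightarrow> (nat \<Rightarrow> 'a) set \<Rightarrow> bool" where
  "is_trace A a \<longleftrightarrow> a \<noteq> {} \<and> a \<subseteq> threads A \<and>
     (\<forall>s\<in>a. \<forall>r\<in>threads A. eqN r s \<longrightarrow> r \<in> a)"

definition upd :: "(nat \<Rightarrow> 'a) \<Rightarrow> 'a list \<Rightarrow> nat \<Rightarrow> 'a" where
  "upd s xs = (\<lambda>i. if i < length xs then xs ! i else s i)"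

record ('a, 'f) talg =
  tcar :: "'a set"
  ttr :: "(nat \<Rightarrow> 'a) set"
  tops :: "'f \<Rightarrow> (nat \<Rightarrow> 'a) \<Rightarrow> 'a"

text \<open>t-algebra of type tau (a set of operation symbols); each operation is
  a map from the trace to the universe (its values outside the trace are irrelevant).\<close>
definition is_talg :: "'f set \<Rightarrow> ('a, 'f) talg \<Rightarrow> bool" where
  "is_talg \<tau> A \<longleftrightarrow> is_trace (tcar A) (ttr A) \<and>
     (\<forall>\<sigma>\<in>\<tau>. \<forall>s\<in>ttr A. tops A \<sigma> s \<in> tcar A)"

definition t_subalg :: "'f set \<Rightarrow> ('a, 'f) talg \<Rightarrow> ('a, 'f) talg \<Rightarrow> bool" where
  "t_subalg \<tau> B A \<longleftrightarrow> is_talg \<tau> A \<and> tcar B \<subseteq> tcar A \<and> is_trace (tcar B) (ttr B) \<and>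
     ttr B \<subseteq> ttr A \<and> (\<forall>\<sigma>\<in>\<tau>. \<forall>s\<in>ttr B. tops A \<sigma> s \<in> tcar B) \<and>
     (\<forall>\<sigma>\<in>\<tau>. \<forall>s\<in>ttr B. tops B \<sigma> s = tops A \<sigma> s)"

definition t_hom :: "'f set \<Rightarrow> ('a, 'f) talg \<Rightarrow> ('b, 'f) talg \<Rightarrow> ('a \<Rightarrow> 'b) \<Rightarrow> bool" where
  "t_hom \<tau> A B f \<longleftrightarrow> (\<forall>x\<in>tcar A. f x \<in> tcar B) \<and> (\<forall>s\<in>ttr A. f \<circ> s \<in> ttr B) \<and>
     (\<forall>\<sigma>\<in>\<tau>. \<forall>s\<in>ttr A. f (tops A \<sigma> s) = tops B \<sigma> (f \<circ> s))"

definition t_hom_onto :: "'f set \<Rightarrow> ('a, 'f) talg \<Rightarrow> ('b, 'f) talg \<Rightarrow> ('a \<Rightarrow> 'b) \<Rightarrow> bool" where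
  "t_hom_onto \<tau> A B f \<longleftrightarrow> t_hom \<tau> A B f \<and> f ` tcar A = tcar B \<and>
     (\<lambda>s. f \<circ> s) ` ttr A = ttr B"

definition t_prod :: "'i set \<Rightarrow> ('i \<Rightarrow> ('a, 'f) talg) \<Rightarrow> ('i \<Rightarrow> 'a, 'f) talg" where
  "t_prod I F = \<lparr> tcar = PiE I (\<lambda>j. tcar (F j)),
      ttr = {s. (\<forall>k. s k \<in> extensional I) \<and> (\<forall>j\<in>I. (\<lambda>k. s k j) \<in> ttr (F j))},
      tops = (\<lambda>\<sigma> s. (\<lambda>j. if j \<in> I then tops (F j) \<sigma> (\<lambda>k. s k j) else undefined)) \<rparr>"

text \<open>tau-terms: Op \<sigma> [t_1,...,t_n] stands for \<sigma>(t_1,...,t_n,e_{n+1},e_{n+2},...).\<close>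
datatype 'f tterm = Var nat | Op 'f "'f tterm list"

fun wf_tterm :: "'f set \<Rightarrow> 'f tterm \<Rightarrow> bool" where
  "wf_tterm \<tau> (Var i) = True"
| "wf_tterm \<tau> (Op \<sigma> ts) = (\<sigma> \<in> \<tau> \<and> (\<forall>t\<in>set ts. wf_tterm \<tau> t))"

fun teval :: "('a, 'f) talg \<Rightarrow> 'f tterm \<Rightarrow> (nat \<Rightarrow> 'a) \<Rightarrow> 'a" where
  "teval A (Var i) s = s i"
| "teval A (Op \<sigma> ts) s = tops A \<sigma> (upd s (map (\<lambda>t. teval A t s) ts))"

definition Mod :: "'f set \<Rightarrow> ('f tterm \<times> 'f tterm) set \<Rightarrow> ('a, 'f) talg \<Rightarrow> bool" where
  "Mod \<tau> \<Sigma> A \<longleftrightarrow> is_talg \<tau> A \<and>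
     (\<forall>(t, u)\<in>\<Sigma>. \<forall>s\<in>ttr A. teval A t s = teval A u s)"

definition gen_alg :: "'f set \<Rightarrow> ('a, 'f) talg \<Rightarrow> (nat \<Rightarrow> 'a) \<Rightarrow> ('a, 'f) talg" where
  "gen_alg \<tau> A s = (let B = {teval A t s | t. wf_tterm \<tau> t} in
     \<lparr> tcar = B, ttr = {r. eqN r s \<and> r \<in> threads (tcar A)} \<inter> threads B, tops = tops A \<rparr>)"

text \<open>Finitary type rho: a set S of symbols with arities ar; rho_n = {\<sigma>\<in>S. ar \<sigma> = n},
  rho* = S.\<close>
definition rho_dim :: "'f set \<Rightarrow> ('f \<Rightarrow> nat) \<Rightarrow> ('a, 'f) talg \<Rightarrow> bool" where
  "rho_dim S ar A \<longleftrightarrow> is_talg S A \<and>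
     (\<forall>\<sigma>\<in>S. \<forall>s\<in>ttr A. \<forall>u\<in>ttr A. eqN s u \<and> (\<forall>i < ar \<sigma>. s i = u i) \<longrightarrow>
        tops A \<sigma> s = tops A \<sigma> u)"

datatype 'f fterm = FV nat | FApp 'f "'f fterm list"

fun wf_fterm :: "'f set \<Rightarrow> ('f \<Rightarrow> nat) \<Rightarrow> 'f fterm \<Rightarrow> bool" where
  "wf_fterm S ar (FV i) = True"
| "wf_fterm S ar (FApp \<sigma> ps) =
     (\<sigma> \<in> S \<and> length ps = ar \<sigma> \<and> (\<forall>p\<in>set ps. wf_fterm S ar p))"

fun star :: "'f fterm \<Rightarrow> 'f tterm" where
  "star (FV i) = Var i"
| "star (FApp \<sigma> ps) = Op \<sigma> (map star ps)"

fun bullet :: "('f \<Rightarrow> nat) \<Rightarrow> 'f tterm \<Rightarrow> 'f fterm" where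
  "bullet ar (Var i) = FV i"
| "bullet ar (Op \<sigma> ts) =
     (if length ts \<le> ar \<sigma>
      then FApp \<sigma> (map (bullet ar) ts @ map FV [length ts..<ar \<sigma>])
      else FApp \<sigma> (take (ar \<sigma>) (map (bullet ar) ts)))"

definition Str :: "'f set \<Rightarrow> ('f \<Rightarrow> nat) \<Rightarrow> ('f tterm \<times> 'f tterm) set" where
  "Str S ar = {(star (bullet ar t), t) | t. wf_tterm S t \<and>
                 t \<notin> star ` {p. wf_fterm S ar p}}"

end

theory Submission
  imports Defs
begin

text \<open>
  Write m for the arity of \<sigma> and, for N > m, let the block shift of a thread
  replace its entries at positions m+1, ..., N by those at m+1+N, ..., 2N.  Two threads
  that agree up to m and beyond some N are equal after this shift, so \<sigma> is
  \<rho>-dimensional iff it is invariant under all block shifts.  That invariance is the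
  identity between \<sigma>(e_1, ..., e_m, e_{m+1+N}, ..., e_{2N}), a term outside the image of
  star, and its normal form \<sigma>(e_1, ..., e_m), hence it follows from Str(\<rho>); conversely,
  in a \<rho>-dimensional algebra every term agrees with its normal form, by induction.
  Block shifts commute with entrywise maps, so invariance passes to homomorphic images
  and products, and it can be checked on the algebras A_s.
\<close>

lemma eqN_iff_eventually_eq: "eqN r s \<longleftrightarrow> (\<exists>n. \<forall>i\<ge>n. r i = s i)"
proof
  assume "eqN r s"
  then obtain n where "{i. r i \<noteq> s i} \<subseteq> {..<n}"
    unfolding eqN_def finite_nat_set_iff_bounded by blast
  then show "\<exists>n. \<forall>i\<ge>n. r i = s i" by (meson leD lessThan_iff mem_Collect_eq subsetD)
next
  assume "\<exists>n. \<forall>i\<ge>n. r i = s i"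
  then obtain n where "\<forall>i\<ge>n. r i = s i" by blast
  then have "{i. r i \<noteq> s i} \<subseteq> {..<n}" using not_less by auto
  then show "eqN r s" unfolding eqN_def using finite_subset by blast
qed

lemma eqN_comp: "eqN r s \<Longrightarrow> eqN (f \<circ> r) (f \<circ> s)"
  unfolding eqN_iff_eventually_eq comp_def by metis

lemma trace_memD: "is_trace A a \<Longrightarrow> s \<in> a \<Longrightarrow> s i \<in> A"
  unfolding is_trace_def threads_def by blast

lemma trace_closed_eqN:
  "is_trace A a \<Longrightarrow> s \<in> a \<Longrightarrow> eqN r s \<Longrightarrow> (\<And>i. r i \<in> A) \<Longrightarrow> r \<in> a"
  unfolding is_trace_def threads_def by blast

lemma eqN_upd: "eqN (upd s xs) s"
  by (auto simp: eqN_iff_eventually_eq upd_def intro!: exI[of _ "length xs"])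

lemma upd_in_trace:
  assumes "is_trace A a" "s \<in> a" "set xs \<subseteq> A"
  shows "upd s xs \<in> a"
  using assms trace_memD[OF assms(1,2)]
  by (intro trace_closed_eqN[OF assms(1,2) eqN_upd]) (auto simp: upd_def)

definition block_shift :: "nat \<Rightarrow> nat \<Rightarrow> (nat \<Rightarrow> 'a) \<Rightarrow> nat \<Rightarrow> 'a" where
  "block_shift m N s = (\<lambda>i. if m \<le> i \<and> i < N then s (i + N) else s i)"

lemma eqN_block_shift: "eqN (block_shift m N s) s"
  by (auto simp: eqN_iff_eventually_eq block_shift_def intro!: exI[of _ N])

lemma block_shift_in_trace: "is_trace A a \<Longrightarrow> s \<in> a \<Longrightarrow> block_shift m N s \<in> a"
  by (rule trace_closed_eqN[OF _ _ eqN_block_shift]) (auto simp: block_shift_def trace_memD)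

lemma comp_block_shift: "f \<circ> block_shift m N s = block_shift m N (f \<circ> s)"
  by (auto simp: block_shift_def)

lemma block_shift_cong:
  "(\<forall>i<m. s i = u i) \<Longrightarrow> (\<forall>i\<ge>N. s i = u i) \<Longrightarrow> block_shift m N s = block_shift m N u"
  unfolding block_shift_def by (auto simp: fun_eq_iff)

lemma block_shift_below: "i < m \<Longrightarrow> block_shift m N s i = s i"
  by (simp add: block_shift_def)

definition shift_invariant :: "'f set \<Rightarrow> ('f \<Rightarrow> nat) \<Rightarrow> ('a, 'f) talg \<Rightarrow> bool" where
  "shift_invariant S ar A \<longleftrightarrow>
     (\<forall>\<sigma>\<in>S. \<forall>s\<in>ttr A. \<forall>N > ar \<sigma>. tops A \<sigma> (block_shift (ar \<sigma>) N s) = tops A \<sigma> s)"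

lemma rho_dim_block_shift:
  assumes "rho_dim S ar A" "\<sigma> \<in> S" "s \<in> ttr A"
  shows "tops A \<sigma> (block_shift (ar \<sigma>) N s) = tops A \<sigma> s"
proof -
  have "is_trace (tcar A) (ttr A)" using assms(1) by (simp add: rho_dim_def is_talg_def)
  then show ?thesis
    using assms block_shift_in_trace eqN_block_shift block_shift_below
    unfolding rho_dim_def by blast
qed

lemma rho_dim_iff_shift_invariant:
  "rho_dim S ar A \<longleftrightarrow> is_talg S A \<and> shift_invariant S ar A"
proof (intro iffI conjI)
  assume "is_talg S A \<and> shift_invariant S ar A"
  then have A: "is_talg S A" and inv: "shift_invariant S ar A" by auto
  show "rho_dim S ar A"
    unfolding rho_dim_def
  proof (intro conjI A ballI impI)
    fix \<sigma> s u assume \<sigma>: "\<sigma> \<in> S" and s: "s \<in> ttr A" and u: "u \<in> ttr A"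
      and agree: "eqN s u \<and> (\<forall>i < ar \<sigma>. s i = u i)"
    then obtain n where n: "\<forall>i\<ge>n. s i = u i" by (auto simp: eqN_iff_eventually_eq)
    define N where "N = n + Suc (ar \<sigma>)"
    have "block_shift (ar \<sigma>) N s = block_shift (ar \<sigma>) N u"
      using agree n by (intro block_shift_cong) (auto simp: N_def)
    moreover have "N > ar \<sigma>" by (simp add: N_def)
    ultimately show "tops A \<sigma> s = tops A \<sigma> u"
      using inv \<sigma> s u unfolding shift_invariant_def by metis
  qed
qed (auto simp: rho_dim_def shift_invariant_def rho_dim_block_shift)

lemma teval_in_carrier:
  assumes "is_talg S A" "s \<in> ttr A" "wf_tterm S t"
  shows "teval A t s \<in> tcar A"
  using assms(3)
proof (induction t)
  case (Var i)
  then show ?case using assms trace_memD by (auto simp: is_talg_def)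
next
  case (Op \<sigma> ts)
  then have "upd s (map (\<lambda>t. teval A t s) ts) \<in> ttr A"
    using assms by (intro upd_in_trace) (auto simp: is_talg_def)
  then show ?case using Op assms by (auto simp: is_talg_def)
qed

lemma teval_star_bullet:
  assumes A: "rho_dim S ar A" and s: "s \<in> ttr A" and "wf_tterm S t"
  shows "teval A (star (bullet ar t)) s = teval A t s"
  using assms(3)
proof (induction t)
  case (Var i)
  then show ?case by simp
next
  case (Op \<sigma> ts)
  have talg: "is_talg S A" and tr: "is_trace (tcar A) (ttr A)"
    using A by (auto simp: rho_dim_def is_talg_def)
  have IH: "\<And>t. t \<in> set ts \<Longrightarrow> teval A (star (bullet ar t)) s = teval A t s"
    using Op by auto
  define vs where "vs = map (\<lambda>t. teval A t s) ts"
  show ?case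
  proof (cases "length ts \<le> ar \<sigma>")
    case True
    then have "upd s (map (\<lambda>t. teval A t s)
        (map star (map (bullet ar) ts @ map FV [length ts..<ar \<sigma>]))) = upd s vs"
      using IH by (auto simp: vs_def upd_def fun_eq_iff nth_append)
    then show ?thesis using True by (simp add: vs_def)
  next
    case False
    have "set vs \<subseteq> tcar A"
      using Op.prems talg s teval_in_carrier[of S A s] by (auto simp: vs_def)
    then have ins: "upd s (take (ar \<sigma>) vs) \<in> ttr A" "upd s vs \<in> ttr A"
      using set_take_subset[of "ar \<sigma>" vs] by (auto intro!: upd_in_trace[OF tr s])
    have "eqN (upd s (take (ar \<sigma>) vs)) (upd s vs)"
      by (auto simp: eqN_iff_eventually_eq upd_def intro!: exI[of _ "length vs"])
    moreover have "\<forall>i < ar \<sigma>. upd s (take (ar \<sigma>) vs) i = upd s vs i"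
      using False by (auto simp: upd_def vs_def)
    ultimately have "tops A \<sigma> (upd s (take (ar \<sigma>) vs)) = tops A \<sigma> (upd s vs)"
      using A ins Op.prems unfolding rho_dim_def by auto
    moreover have "map (\<lambda>t. teval A t s) (map star (take (ar \<sigma>) (map (bullet ar) ts)))
        = take (ar \<sigma>) vs"
      using IH by (auto simp: vs_def take_map dest: in_set_takeD)
    ultimately show ?thesis using False by (simp add: vs_def)
  qed
qed

lemma rho_dim_imp_Mod_Str: "rho_dim S ar A \<Longrightarrow> Mod S (Str S ar) A"
  using teval_star_bullet[of S ar A] by (auto simp: Mod_def Str_def rho_dim_def)

definition shift_term :: "'f \<Rightarrow> nat \<Rightarrow> nat \<Rightarrow> 'f tterm" where
  "shift_term \<sigma> m N = Op \<sigma> (map (\<lambda>i. Var (if i < m then i else i + N)) [0..<N])"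

lemma teval_shift_term: "teval A (shift_term \<sigma> m N) s = tops A \<sigma> (block_shift m N s)"
  by (auto simp: shift_term_def upd_def block_shift_def intro!: arg_cong[where f="tops A \<sigma>"])

lemma teval_star_bullet_shift_term:
  "ar \<sigma> < N \<Longrightarrow> teval A (star (bullet ar (shift_term \<sigma> (ar \<sigma>) N))) s = tops A \<sigma> s"
  by (auto simp: shift_term_def upd_def take_map intro!: arg_cong[where f="tops A \<sigma>"])

lemma shift_term_in_Str:
  assumes "\<sigma> \<in> S" "ar \<sigma> < N"
  shows "(star (bullet ar (shift_term \<sigma> (ar \<sigma>) N)), shift_term \<sigma> (ar \<sigma>) N) \<in> Str S ar"
proof -
  have "shift_term \<sigma> (ar \<sigma>) N \<noteq> star p" if "wf_fterm S ar p" for p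
    using that assms(2) by (cases p) (auto simp: shift_term_def dest: arg_cong[of _ _ length])
  then show ?thesis using assms(1) by (auto simp: Str_def shift_term_def)
qed

lemma Mod_Str_imp_rho_dim:
  assumes "Mod S (Str S ar) A"
  shows "rho_dim S ar A"
  unfolding rho_dim_iff_shift_invariant shift_invariant_def
proof (intro conjI ballI allI impI)
  show "is_talg S A" using assms by (simp add: Mod_def)
  fix \<sigma> s N assume "\<sigma> \<in> S" "s \<in> ttr A" "ar \<sigma> < N"
  then show "tops A \<sigma> (block_shift (ar \<sigma>) N s) = tops A \<sigma> s"
    using assms shift_term_in_Str[of \<sigma> S ar N]
    by (fastforce simp: Mod_def teval_shift_term teval_star_bullet_shift_term)
qed

lemma rho_dim_iff_Mod_Str: "rho_dim S ar A \<longleftrightarrow> Mod S (Str S ar) A"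
  using rho_dim_imp_Mod_Str Mod_Str_imp_rho_dim by blast

lemma rho_dim_hom_image:
  assumes A: "rho_dim S ar A" and B: "is_talg S B" and f: "t_hom_onto S A B f"
  shows "rho_dim S ar B"
  unfolding rho_dim_iff_shift_invariant shift_invariant_def
proof (intro conjI B ballI allI impI)
  fix \<sigma> s' N assume \<sigma>: "\<sigma> \<in> S" and "s' \<in> ttr B"
  then obtain s where s: "s \<in> ttr A" and s': "s' = f \<circ> s"
    using f unfolding t_hom_onto_def by blast
  have tr: "is_trace (tcar A) (ttr A)" using A by (simp add: rho_dim_def is_talg_def)
  have hom: "\<And>r. r \<in> ttr A \<Longrightarrow> tops B \<sigma> (f \<circ> r) = f (tops A \<sigma> r)"
    using f \<sigma> unfolding t_hom_onto_def t_hom_def by auto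
  have "tops B \<sigma> (block_shift (ar \<sigma>) N s') = f (tops A \<sigma> (block_shift (ar \<sigma>) N s))"
    using hom[OF block_shift_in_trace[OF tr s]] by (simp add: s' comp_block_shift)
  also have "\<dots> = f (tops A \<sigma> s)" using rho_dim_block_shift[OF A \<sigma> s] by simp
  also have "\<dots> = tops B \<sigma> s'" using hom[OF s] by (simp add: s')
  finally show "tops B \<sigma> (block_shift (ar \<sigma>) N s') = tops B \<sigma> s'" .
qed

lemma rho_dim_t_subalg:
  assumes A: "rho_dim S ar A" and B: "t_subalg S B A"
  shows "rho_dim S ar B"
  unfolding rho_dim_def
proof (intro conjI ballI impI)
  show "is_talg S B" using B by (auto simp: t_subalg_def is_talg_def)
  fix \<sigma> s u assume h: "\<sigma> \<in> S" "s \<in> ttr B" "u \<in> ttr B" "eqN s u \<and> (\<forall>i<ar \<sigma>. s i = u i)"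
  moreover have "s \<in> ttr A" "u \<in> ttr A" using B h by (auto simp: t_subalg_def)
  ultimately have "tops A \<sigma> s = tops A \<sigma> u" using A unfolding rho_dim_def by blast
  then show "tops B \<sigma> s = tops B \<sigma> u" using B h by (auto simp: t_subalg_def)
qed

lemma tcar_t_prod: "tcar (t_prod I F) = PiE I (\<lambda>j. tcar (F j))"
  and ttr_t_prod: "s \<in> ttr (t_prod I F) \<longleftrightarrow>
     (\<forall>k. s k \<in> extensional I) \<and> (\<forall>j\<in>I. (\<lambda>k. s k j) \<in> ttr (F j))"
  and tops_t_prod: "tops (t_prod I F) \<sigma> s =
     (\<lambda>j. if j \<in> I then tops (F j) \<sigma> (\<lambda>k. s k j) else undefined)"
  by (simp_all add: t_prod_def)

lemma is_trace_t_prod: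
  assumes tr: "\<And>j. j \<in> I \<Longrightarrow> is_trace (tcar (F j)) (ttr (F j))"
  shows "is_trace (tcar (t_prod I F)) (ttr (t_prod I F))"
  unfolding is_trace_def
proof (intro conjI ballI impI)
  let ?s = "\<lambda>k j. if j \<in> I then (SOME x. x \<in> ttr (F j)) k else undefined"
  have "(SOME x. x \<in> ttr (F j)) \<in> ttr (F j)" if "j \<in> I" for j
    using tr[OF that] by (simp add: is_trace_def some_in_eq)
  then have "?s \<in> ttr (t_prod I F)" by (auto simp: ttr_t_prod extensional_def)
  then show "ttr (t_prod I F) \<noteq> {}" by blast
  show "ttr (t_prod I F) \<subseteq> threads (tcar (t_prod I F))"
    using tr trace_memD by (fastforce simp: ttr_t_prod tcar_t_prod threads_def PiE_iff)
next
  fix s r assume s: "s \<in> ttr (t_prod I F)" and "r \<in> threads (tcar (t_prod I F))" and "eqN r s"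
  then have r: "\<And>k. r k \<in> PiE I (\<lambda>j. tcar (F j))"
    by (auto simp: threads_def tcar_t_prod)
  have "(\<lambda>k. r k j) \<in> ttr (F j)" if j: "j \<in> I" for j
  proof (rule trace_closed_eqN[OF tr[OF j]])
    show "(\<lambda>k. s k j) \<in> ttr (F j)" using s j by (simp add: ttr_t_prod)
    show "eqN (\<lambda>k. r k j) (\<lambda>k. s k j)"
      using eqN_comp[OF \<open>eqN r s\<close>, of "\<lambda>x. x j"] by (simp add: comp_def)
    show "r k j \<in> tcar (F j)" for k using r j by blast
  qed
  then show "r \<in> ttr (t_prod I F)" using r by (auto simp: ttr_t_prod PiE_iff)
qed

lemma is_talg_t_prod:
  assumes "\<forall>j\<in>I. is_talg S (F j)"
  shows "is_talg S (t_prod I F)"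
  using assms is_trace_t_prod[of I F]
  by (auto simp: is_talg_def tcar_t_prod ttr_t_prod tops_t_prod)

lemma rho_dim_t_prod:
  assumes F: "\<forall>j\<in>I. rho_dim S ar (F j)"
  shows "rho_dim S ar (t_prod I F)"
  unfolding rho_dim_iff_shift_invariant shift_invariant_def
proof (intro conjI ballI allI impI)
  show "is_talg S (t_prod I F)" using F by (auto simp: rho_dim_def intro: is_talg_t_prod)
  fix \<sigma> s N assume \<sigma>: "\<sigma> \<in> S" and s: "s \<in> ttr (t_prod I F)"
  have "tops (F j) \<sigma> (\<lambda>k. block_shift (ar \<sigma>) N s k j) = tops (F j) \<sigma> (\<lambda>k. s k j)"
    if j: "j \<in> I" for j
    using rho_dim_block_shift[OF F[rule_format, OF j] \<sigma>, of "\<lambda>k. s k j" N]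
      comp_block_shift[of "\<lambda>x. x j" "ar \<sigma>" N s] s j
    by (simp add: ttr_t_prod comp_def)
  then show "tops (t_prod I F) \<sigma> (block_shift (ar \<sigma>) N s) = tops (t_prod I F) \<sigma> s"
    by (simp add: tops_t_prod fun_eq_iff)
qed

lemma thread_in_gen_alg:
  assumes "is_talg S A" "s \<in> ttr A"
  shows "s \<in> ttr (gen_alg S A s)"
proof -
  have "s \<in> threads (tcar A)" using assms by (auto simp: is_talg_def is_trace_def)
  moreover have "s \<in> threads {teval A t s | t. wf_tterm S t}"
    unfolding threads_def by (auto intro!: exI[of _ "Var _"])
  ultimately show ?thesis by (simp add: gen_alg_def Let_def eqN_def)
qed

lemma rho_dim_if_gen_algs:
  assumes A: "is_talg S A" and gen: "\<forall>s\<in>ttr A. rho_dim S ar (gen_alg S A s)"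
  shows "rho_dim S ar A"
  unfolding rho_dim_iff_shift_invariant shift_invariant_def
proof (intro conjI A ballI allI impI)
  fix \<sigma> s N assume "\<sigma> \<in> S" "s \<in> ttr A"
  from rho_dim_block_shift[OF gen[rule_format, OF this(2)] this(1) thread_in_gen_alg[OF A this(2)]]
  show "tops A \<sigma> (block_shift (ar \<sigma>) N s) = tops A \<sigma> s"
    by (simp add: gen_alg_def Let_def)
qed

theorem mainTheorem12:
  fixes S :: "'f set" and ar :: "'f \<Rightarrow> nat"
  shows
    \<comment> \<open>the class of rho-dimensional t-algebras equals Mod(Str(rho))\<close>
    "(\<forall>A :: ('a, 'f) talg. rho_dim S ar A \<longleftrightarrow> Mod S (Str S ar) A)
     \<comment> \<open>closure under t-homomorphic images\<close>
     \<and> (\<forall>(A :: ('a, 'f) talg) (B :: ('b, 'f) talg) f.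
          rho_dim S ar A \<and> is_talg S B \<and> t_hom_onto S A B f \<longrightarrow> rho_dim S ar B)
     \<comment> \<open>closure under t-subalgebras\<close>
     \<and> (\<forall>(A :: ('a, 'f) talg) B. rho_dim S ar A \<and> t_subalg S B A \<longrightarrow> rho_dim S ar B)
     \<comment> \<open>closure under t-products\<close>
     \<and> (\<forall>(I :: 'i set) (F :: 'i \<Rightarrow> ('c, 'f) talg).
          (\<forall>j\<in>I. rho_dim S ar (F j)) \<longrightarrow> rho_dim S ar (t_prod I F))
     \<comment> \<open>the Et-property\<close>
     \<and> (\<forall>A :: ('a, 'f) talg. is_talg S A \<and> (\<forall>s\<in>ttr A. rho_dim S ar (gen_alg S A s))
          \<longrightarrow> rho_dim S ar A)"
  by (intro conjI allI impI rho_dim_iff_Mod_Str)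
    (auto intro: rho_dim_hom_image rho_dim_t_subalg rho_dim_t_prod rho_dim_if_gen_algs)

end
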